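(* Let $p$ be a prime, $n\ge1$, and let $V,W\subset\mathbb{F}_{p^n}$ be $\mathbb{F}_p$-subspaces with $\dim_{\mathbb{F}_p}V+\dim_{\mathbb{F}_p}W\le n$. Then there exists $z\in\mathbb{F}_{p^n}^\times$ such that $V\cap zW=\{0\}$, where $zW=\{zw: w\in W\}$. *)

theory Defs
  imports Main "Berlekamp_Zassenhaus.Finite_Field"
begin

text \<open>Scalar multiplication of the prime field F_p (modelled as the type 'p mod_ring,
  with CARD('p) = p prime) on a field of characteristic p.\<close>
definition fp_scale :: "'p::prime_card mod_ring \<Rightarrow> 'a::field \<Rightarrow> 'a" where
  "fp_scale c x = of_int (to_int_mod_ring c) * x"

end

theory Submission
  imports Defs
begin

text \<open>A subspace of dimension d over F_p has at most p^d elements, so |V| |W| \<le> p^n = |F|.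
  If z w \<in> V is nonzero for some w \<in> W, then z = v / w with v \<in> V - {0} and w \<in> W - {0};
  there are at most (|V| - 1)(|W| - 1) < |F| - 1 such quotients, so some nonzero z avoids them all.\<close>

lemma vector_space_fp_scale:
  assumes "CARD('p::prime_card) = CHAR('a::field)"
  shows "vector_space (fp_scale :: 'p mod_ring \<Rightarrow> 'a \<Rightarrow> 'a)"
proof
  have of_int_mod: "of_int (x mod int CARD('p)) = (of_int x :: 'a)" for x
    using assms of_int_mod_CHAR[of x] by simp
  fix a b :: "'p mod_ring" and x y :: 'a
  show "fp_scale a (x + y) = fp_scale a x + fp_scale a y"
    by (simp add: fp_scale_def distrib_left)
  show "fp_scale (a + b) x = fp_scale a x + fp_scale b x"
    by (simp add: fp_scale_def to_int_mod_ring_add of_int_mod distrib_right)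
  show "fp_scale a (fp_scale b x) = fp_scale (a * b) x"
    by (simp add: fp_scale_def to_int_mod_ring_mult of_int_mod)
  show "fp_scale 1 x = x"
    by (simp add: fp_scale_def)
qed

lemma card_span_le:
  fixes scale :: "'c::{field,finite} \<Rightarrow> 'b::{ab_group_add,finite} \<Rightarrow> 'b"
  assumes "vector_space scale" and "finite B"
  shows "card (module.span scale B) \<le> CARD('c) ^ card B"
  using assms(2)
proof (induction B rule: finite_induct)
  case empty
  interpret vector_space scale by fact
  show ?case by simp
next
  case (insert b B)
  interpret vector_space scale by fact
  let ?f = "\<lambda>(c, x). scale c b + x"
  have "span (insert b B) \<subseteq> ?f ` (UNIV \<times> span B)"
  proof
    fix y assume "y \<in> span (insert b B)"
    then obtain k where "y - scale k b \<in> span B" by (auto simp: span_insert)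
    then show "y \<in> ?f ` (UNIV \<times> span B)"
      by (intro image_eqI[of _ _ "(k, y - scale k b)"]) auto
  qed
  then have "card (span (insert b B)) \<le> card (?f ` (UNIV \<times> span B))"
    by (intro card_mono) auto
  also have "\<dots> \<le> CARD('c) * card (span B)"
    using card_image_le[of "UNIV \<times> span B" ?f] by (simp add: card_cartesian_product)
  also have "\<dots> \<le> CARD('c) * CARD('c) ^ card B"
    using insert.IH by simp
  finally show ?case using insert by simp
qed

lemma card_subspace_le:
  fixes scale :: "'c::{field,finite} \<Rightarrow> 'b::{ab_group_add,finite} \<Rightarrow> 'b"
  assumes "vector_space scale" and "module.subspace scale V"
  shows "card V \<le> CARD('c) ^ vector_space.dim scale V"
proof -
  interpret vector_space scale by fact
  obtain B where B: "B \<subseteq> V" "independent B" "V \<subseteq> span B" "card B = dim V"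
    by (rule basis_exists)
  have "card V \<le> card (span B)"
    using B by (intro card_mono) auto
  also have "\<dots> \<le> CARD('c) ^ dim V"
    using card_span_le[OF assms(1), of B] B by simp
  finally show ?thesis .
qed

lemma inter_scaled_eq_zero:
  fixes V W :: "'a::field set"
  assumes "0 \<in> V" and "0 \<in> W"
    and "z \<notin> (\<lambda>(v, w). v / w) ` ((V - {0}) \<times> (W - {0}))"
  shows "V \<inter> (\<lambda>w. z * w) ` W = {0}"
proof -
  have "x = 0" if "x \<in> V" "w \<in> W" "x = z * w" for x w
  proof (rule ccontr)
    assume "x \<noteq> 0"
    with that have "w \<noteq> 0" by simp
    with that have "z = (\<lambda>(v, w). v / w) (x, w)" by simp
    moreover have "(x, w) \<in> (V - {0}) \<times> (W - {0})"
      using that \<open>x \<noteq> 0\<close> \<open>w \<noteq> 0\<close> by simp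
    ultimately show False
      using assms(3) by blast
  qed
  with assms(1,2) show ?thesis by auto
qed

lemma diff1_mult_diff1_less:
  fixes a b N :: nat
  assumes "1 \<le> a" and "1 \<le> b" and "a * b \<le> N" and "2 \<le> N"
  shows "(a - 1) * (b - 1) < N - 1"
proof -
  obtain a' b' where ab: "a = Suc a'" "b = Suc b'"
    using assms(1,2) by (cases a; cases b) auto
  then have "a * b = a' * b' + a' + b' + 1"
    by simp
  with assms(3,4) ab show ?thesis
    by (cases "a' + b' = 0") auto
qed

lemma ex_nonzero_scaled_inter_eq_zero:
  fixes V W :: "'a::{field,finite} set"
  assumes "0 \<in> V" and "0 \<in> W" and "card V * card W \<le> CARD('a)"
  shows "\<exists>z. z \<noteq> 0 \<and> V \<inter> (\<lambda>w. z * w) ` W = {0}"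
proof -
  define Q where "Q = (\<lambda>(v, w). v / w) ` ((V - {0}) \<times> (W - {0}))"
  have "card Q \<le> (card V - 1) * (card W - 1)"
    using card_image_le[of "(V - {0}) \<times> (W - {0})"] assms(1,2)
    by (simp add: Q_def card_cartesian_product card_Diff_singleton)
  also have "\<dots> < CARD('a) - 1"
  proof (rule diff1_mult_diff1_less)
    show "1 \<le> card V" "1 \<le> card W"
      using assms(1,2) by (auto simp: Suc_le_eq card_gt_0_iff)
    show "2 \<le> CARD('a)"
      using card_mono[of UNIV "{0, 1 :: 'a}"] by simp
  qed (fact assms(3))
  also have "\<dots> = card (- {0 :: 'a})"
    by (simp add: Compl_eq_Diff_UNIV card_Diff_singleton)
  finally obtain z where "z \<noteq> 0" and "z \<notin> Q"
    by (metis Compl_iff card_mono finite not_le singletonI subsetI)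
  with inter_scaled_eq_zero[OF assms(1,2), of z] show ?thesis
    unfolding Q_def by blast
qed

theorem mainTheorem2:
  fixes V W :: "'a::{field,finite} set"
    and p n :: nat
  assumes "CARD('p) = p"
    and "prime p"
    and "n \<ge> 1"
    and "CARD('a) = p ^ n"
    and "CHAR('a) = p"
    and "module.subspace (fp_scale :: 'p::prime_card mod_ring \<Rightarrow> 'a \<Rightarrow> 'a) V"
    and "module.subspace (fp_scale :: 'p::prime_card mod_ring \<Rightarrow> 'a \<Rightarrow> 'a) W"
    and "vector_space.dim (fp_scale :: 'p::prime_card mod_ring \<Rightarrow> 'a \<Rightarrow> 'a) V + vector_space.dim (fp_scale :: 'p::prime_card mod_ring \<Rightarrow> 'a \<Rightarrow> 'a) W \<le> n"
  shows "\<exists>z::'a. z \<noteq> 0 \<and> V \<inter> ((\<lambda>w. z * w) ` W) = {0}"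
proof -
  have vs: "vector_space (fp_scale :: 'p mod_ring \<Rightarrow> 'a \<Rightarrow> 'a)"
    using assms(1,5) by (intro vector_space_fp_scale) simp
  interpret vector_space "fp_scale :: 'p mod_ring \<Rightarrow> 'a \<Rightarrow> 'a" by (fact vs)
  have "card V * card W \<le> p ^ dim V * p ^ dim W"
    using card_subspace_le[OF vs assms(6)] card_subspace_le[OF vs assms(7)] assms(1)
    by (intro mult_le_mono) simp_all
  also have "\<dots> = p ^ (dim V + dim W)"
    by (simp add: power_add)
  also have "\<dots> \<le> p ^ n"
    using assms(2,8) prime_gt_0_nat by (intro power_increasing) (auto simp: Suc_le_eq)
  finally have "card V * card W \<le> CARD('a)"
    using assms(4) by simp
  moreover have "0 \<in> V" "0 \<in> W"
    using assms(6,7) subspace_0 by auto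
  ultimately show ?thesis
    by (rule ex_nonzero_scaled_inter_eq_zero[rotated 2])
qed

end
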